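(* Consider a trial-offer market with social influence in which product $i$ is permanently displayed at a position of visibility $v_i>0$, with initial appeals $A_i>0$ and qualities $q_i\in[0,1]$ ($1\le i\le n$). Write $\hat q_i=v_iq_i$ and suppose there is $1\le j<n$ and numbers $\hat q^+>\hat q^-\ge 0$ with $\hat q_1=\cdots=\hat q_j=\hat q^+$ and $\hat q_{j+1}=\cdots=\hat q_n=\hat q^-$. Then almost surely the total market share of products $j+1,\dots,n$, namely $\frac{\sum_{i=j+1}^n d_{i,t}}{\sum_{i=1}^n d_{i,t}}$, converges to $0$ as $t\to\infty$.
   Context: Dynamic market: $d_{i,t}$ is the number of purchases of product $i$ before step $t$ ($d_{i,1}=0$), $a_{i,t}=A_i+d_{i,t}$. At step $t$ one participant tries product $i$ with probability $\frac{v_i a_{i,t}}{\sum_k v_k a_{k,t}}$, then purchases it with probability $q_i$ (independently); if purchased, $d_{i,t+1}=d_{i,t}+1$, all other counts unchanged. *)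

theory Defs
  imports "HOL-Probability.Probability"
begin

text \<open>A state is the purchase-count vector d :: nat => nat
  (only entries 1..n matter).  The randomness of the market is realised by an i.i.d.
  sequence of pairs (u_t, w_t) of independent uniform [0,1] variables: u_t selects the
  product that is tried (product i with probability v_i a_i / sum_k v_k a_k, by inverse
  CDF), and w_t < q_i decides the purchase (probability q_i, independent).\<close>

definition unit_unif :: "real measure" where
  "unit_unif = uniform_measure lborel {0..1}"

definition market_space :: "(real \<times> real) stream measure" where
  "market_space = stream_space (unit_unif \<Otimes>\<^sub>M unit_unif)"

definition try_prob :: "nat \<Rightarrow> (nat \<Rightarrow> real) \<Rightarrow> (nat \<Rightarrow> real) \<Rightarrow> (nat \<Rightarrow> nat) \<Rightarrow> nat \<Rightarrow> real" where
  "try_prob n v A d i = v i * (A i + real (d i)) / (\<Sum>k\<in>{1..n}. v k * (A k + real (d k)))"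

definition cum_prob :: "nat \<Rightarrow> (nat \<Rightarrow> real) \<Rightarrow> (nat \<Rightarrow> real) \<Rightarrow> (nat \<Rightarrow> nat) \<Rightarrow> nat \<Rightarrow> real" where
  "cum_prob n v A d i = (\<Sum>k\<in>{1..i}. try_prob n v A d k)"

text \<open>The product tried when the uniform sample is u (inverse CDF; the null event
  u >= 1 defaults to product n).\<close>
definition chosen :: "nat \<Rightarrow> (nat \<Rightarrow> real) \<Rightarrow> (nat \<Rightarrow> real) \<Rightarrow> (nat \<Rightarrow> nat) \<Rightarrow> real \<Rightarrow> nat" where
  "chosen n v A d u =
     (if \<exists>i\<in>{1..n}. u < cum_prob n v A d i
      then (LEAST i. i \<in> {1..n} \<and> u < cum_prob n v A d i) else n)"

definition market_step :: "nat \<Rightarrow> (nat \<Rightarrow> real) \<Rightarrow> (nat \<Rightarrow> real) \<Rightarrow> (nat \<Rightarrow> real)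
    \<Rightarrow> (nat \<Rightarrow> nat) \<Rightarrow> real \<times> real \<Rightarrow> (nat \<Rightarrow> nat)" where
  "market_step n v A q d uw =
     (let i = chosen n v A d (fst uw)
      in if snd uw < q i then d(i := Suc (d i)) else d)"

text \<open>purchases n v A q \<omega> t = the count vector before step t+1 (paper's d_{.,t+1});
  purchases ... 0 = 0 corresponds to d_{i,1} = 0.\<close>
primrec purchases :: "nat \<Rightarrow> (nat \<Rightarrow> real) \<Rightarrow> (nat \<Rightarrow> real) \<Rightarrow> (nat \<Rightarrow> real)
    \<Rightarrow> (real \<times> real) stream \<Rightarrow> nat \<Rightarrow> (nat \<Rightarrow> nat)" where
  "purchases n v A q \<omega> 0 = (\<lambda>i. 0)"
| "purchases n v A q \<omega> (Suc t) = market_step n v A q (purchases n v A q \<omega> t) (\<omega> !! t)"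

end

(*
  Let H = sum_{i<=j} (A_i + d_i) and L = sum_{i>j} (A_i + d_i) be the appeals of the two tiers and
  T = sum_i v_i (A_i + d_i). In one step H grows by 1 with probability q+ H / T and L with probability
  q- L / T. For beta = (q+ + q-) / (2 q+) < 1, Bernoulli's inequality makes L / H^beta a nonnegative
  supermartingale once H >= 2 q- / (q+ - q-), so by Ville's maximal inequality it stays bounded
  almost surely. As T grows at most linearly in time, H increases with conditional probability at
  least q+ H / (T_0 + t max v) at step t; these probabilities are not summable, so H -> oo almost
  surely. Hence the share of products j+1..n, at most L / (H - H_0) <= 2 C H^(beta - 1), tends to 0.
*)

theory Submission
  imports Defs
begin

lemma bdd_above_range_iff_nat:
  fixes g :: "'b \<Rightarrow> real"
  shows "bdd_above (range g) \<longleftrightarrow> (\<exists>C::nat. \<forall>t. g t \<le> real C)"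
proof
  assume "bdd_above (range g)"
  then obtain C where "\<And>t. g t \<le> C" by (auto simp: bdd_above_def)
  then have "\<forall>t. g t \<le> real (nat \<lceil>C\<rceil>)"
    by (meson order_trans real_nat_ceiling_ge)
  then show "\<exists>C::nat. \<forall>t. g t \<le> real C" ..
qed (auto intro: bdd_aboveI2)

lemma harmonic_factor_nonneg:
  fixes b c \<delta> :: real
  assumes "0 < c" "c \<le> b" "0 \<le> \<delta>"
  shows "0 \<le> 1 - c / (b + \<delta> * real t)"
proof -
  have "c \<le> b + \<delta> * real t" using assms by (simp add: add_increasing2)
  then show ?thesis using assms by (simp add: field_simps)
qed

lemma harmonic_product_tendsto_zero:
  fixes b c \<delta> :: real
  assumes c: "0 < c" "c \<le> b" and \<delta>: "0 \<le> \<delta>"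
  shows "(\<lambda>N. \<Prod>t<N. 1 - c / (b + \<delta> * real t)) \<longlonglongrightarrow> 0"
proof (rule tendsto_sandwich[OF _ _ tendsto_const])
  define a where "a = c / (b + \<delta>)"
  have a: "0 < a" using c \<delta> unfolding a_def by simp
  have factor: "0 \<le> 1 - c / (b + \<delta> * real t) \<and> 1 - c / (b + \<delta> * real t) \<le> exp (- (a / real (Suc t)))"
    for t
  proof -
    have c_le: "c \<le> b + \<delta> * real t" using c \<delta> by (simp add: add_increasing2)
    have "a / real (Suc t) = c / ((b + \<delta>) * (real t + 1))" unfolding a_def by (simp add: field_simps)
    also have "\<dots> \<le> c / (b + \<delta> * real t)"
    proof (rule divide_left_mono)
      show "b + \<delta> * real t \<le> (b + \<delta>) * (real t + 1)" using c \<delta> by (simp add: algebra_simps)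
      show "0 < (b + \<delta>) * (real t + 1) * (b + \<delta> * real t)" using c \<delta> c_le by simp
    qed (use c in simp)
    finally have "exp (- (c / (b + \<delta> * real t))) \<le> exp (- (a / real (Suc t)))" by simp
    moreover have "1 - c / (b + \<delta> * real t) \<le> exp (- (c / (b + \<delta> * real t)))"
      using exp_ge_add_one_self[of "- (c / (b + \<delta> * real t))"] by simp
    ultimately show ?thesis using harmonic_factor_nonneg[OF c \<delta>, of t] by linarith
  qed
  have "(\<Prod>t<N. 1 - c / (b + \<delta> * real t)) \<le> (\<Prod>t<N. exp (- (a / real (Suc t))))" for N
    using factor by (intro prod_mono) auto
  also have "(\<Prod>t<N. exp (- (a / real (Suc t)))) = exp (- (a * harm N))" for N
    by (simp add: exp_sum[symmetric] sum_negf harm_altdef sum_distrib_left divide_inverse)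
  finally show "\<forall>\<^sub>F N in sequentially. (\<Prod>t<N. 1 - c / (b + \<delta> * real t)) \<le> exp (- (a * harm N))"
    by simp
  show "\<forall>\<^sub>F N in sequentially. 0 \<le> (\<Prod>t<N. 1 - c / (b + \<delta> * real t))"
    using factor by (simp add: prod_nonneg)
  have "filterlim (\<lambda>N. a * harm N) at_top sequentially"
    using a by (intro filterlim_tendsto_pos_mult_at_top[OF tendsto_const] harm_at_top)
  then show "(\<lambda>N. exp (- (a * harm N))) \<longlonglongrightarrow> 0"
    by (intro filterlim_compose[OF exp_at_bot]) (simp add: filterlim_uminus_at_bot)
qed

lemma bernoulli_powr_le:
  fixes x \<beta> :: real
  assumes "0 \<le> x" "x < 1" "0 \<le> \<beta>" "\<beta> \<le> 1"
  shows "(1 - x) powr \<beta> \<le> 1 - \<beta> * x"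
proof -
  have "(1 - x) powr \<beta> * 1 powr (1 - \<beta>) \<le> \<beta> * (1 - x) + (1 - \<beta>) * 1"
    using assms by (intro Youngs_inequality_0) auto
  then show ?thesis by (simp add: algebra_simps)
qed

lemma nat_seq_at_top_if_moving:
  fixes g :: "nat \<Rightarrow> nat"
  assumes mono: "\<And>T t. g T \<le> g (T + t)" and moves: "\<And>T. \<exists>t. g (T + t) \<noteq> g T"
  shows "filterlim g at_top sequentially"
proof -
  have "\<exists>T. m \<le> g T" for m
  proof (induction m)
    case (Suc m)
    then obtain T where "m \<le> g T" by blast
    moreover obtain t where "g (T + t) \<noteq> g T" using moves by blast
    ultimately show ?case using mono[of T t] by (intro exI[of _ "T + t"]) simp
  qed simp
  then have "\<forall>\<^sub>F t in sequentially. m \<le> g t" for m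
    unfolding eventually_sequentially by (metis le_add_diff_inverse mono order_trans)
  then show ?thesis by (simp add: filterlim_at_top)
qed

section \<open>Markov chains driven by i.i.d. samples\<close>

locale iid_chain = prob_space M for M :: "'a measure" +
  fixes f :: "'s \<Rightarrow> 'a \<Rightarrow> 's"
  assumes measurable_transition: "f s \<in> M \<rightarrow>\<^sub>M count_space UNIV"
    and finite_transition_image: "finite (f s ` space M)"
begin

abbreviation "S \<equiv> stream_space M"

primrec chain :: "'s \<Rightarrow> 'a stream \<Rightarrow> nat \<Rightarrow> 's" where
  "chain s \<omega> 0 = s"
| "chain s \<omega> (Suc t) = f (chain s \<omega> t) (\<omega> !! t)"

lemma chain_Stream: "chain s (x ## \<omega>) (Suc t) = chain (f s x) \<omega> t"
  by (induction t) auto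

lemma chain_add: "chain s \<omega> (T + t) = chain (chain s \<omega> T) (sdrop T \<omega>) t"
  by (induction t) (auto simp: sdrop_snth)

lemma all_chain_Stream:
  "(\<forall>t\<le>Suc N. Q (chain s (x ## \<omega>) t)) \<longleftrightarrow> Q s \<and> (\<forall>t\<le>N. Q (chain (f s x) \<omega> t))"
proof
  assume H: "\<forall>t\<le>Suc N. Q (chain s (x ## \<omega>) t)"
  have "Q (chain (f s x) \<omega> t)" if "t \<le> N" for t
    using H[rule_format, of "Suc t"] that by (simp del: chain.simps(2) add: chain_Stream)
  moreover have "Q s" using H[rule_format, of 0] by simp
  ultimately show "Q s \<and> (\<forall>t\<le>N. Q (chain (f s x) \<omega> t))" by blast
next
  assume H: "Q s \<and> (\<forall>t\<le>N. Q (chain (f s x) \<omega> t))"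
  show "\<forall>t\<le>Suc N. Q (chain s (x ## \<omega>) t)"
  proof (intro allI impI)
    fix t assume "t \<le> Suc N"
    with H show "Q (chain s (x ## \<omega>) t)"
      by (cases t) (simp_all del: chain.simps(2) add: chain_Stream)
  qed
qed

lemma ex_chain_Stream:
  "(\<exists>t\<le>Suc N. Q (chain s (x ## \<omega>) t)) \<longleftrightarrow> Q s \<or> (\<exists>t\<le>N. Q (chain (f s x) \<omega> t))"
  using all_chain_Stream[of N "\<lambda>e. \<not> Q e" s x \<omega>] by blast

text \<open>Finitely many states are reachable in \<open>t\<close> steps; this makes \<open>chain\<close> measurable
  although the state space may be uncountable.\<close>

primrec reachable :: "'s \<Rightarrow> nat \<Rightarrow> 's set" where
  "reachable s 0 = {s}"
| "reachable s (Suc t) = (\<Union>e\<in>reachable s t. f e ` space M)"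

lemma finite_reachable: "finite (reachable s t)"
  by (induction t) (auto simp: finite_transition_image)

lemma measurable_chain: "(\<lambda>\<omega>. chain s \<omega> t) \<in> S \<rightarrow>\<^sub>M count_space (reachable s t)"
proof (induction t)
  case (Suc t)
  have "(\<lambda>\<omega>. f (chain s \<omega> t) (\<omega> !! t)) \<in> S \<rightarrow>\<^sub>M count_space (reachable s (Suc t))"
  proof (rule measurable_compose_countable'[OF _ Suc countable_finite[OF finite_reachable]])
    fix e assume e: "e \<in> reachable s t"
    have meas: "(\<lambda>\<omega>. f e (\<omega> !! t)) \<in> S \<rightarrow>\<^sub>M count_space UNIV"
      using measurable_transition[of e] by measurable
    moreover have "f e (\<omega> !! t) \<in> reachable s (Suc t)" if "\<omega> \<in> space S" for \<omega>
      using e that by (auto simp: space_stream_space snth_in intro!: bexI[of _ e])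
    ultimately show "(\<lambda>\<omega>. f e (\<omega> !! t)) \<in> S \<rightarrow>\<^sub>M count_space (reachable s (Suc t))"
      using measurable_sets[OF meas] countable_finite[OF finite_reachable[of s "Suc t"]]
      by (subst measurable_count_space_eq_countable) auto
  qed
  then show ?case by simp
qed simp

lemma measurable_chain_compose:
  assumes "\<And>e. F e \<in> S \<rightarrow>\<^sub>M N"
  shows "(\<lambda>\<omega>. F (chain s \<omega> t) \<omega>) \<in> S \<rightarrow>\<^sub>M N"
  using measurable_compose_countable'[OF assms measurable_chain countable_finite[OF finite_reachable]] .

lemma pred_chain: "Measurable.pred S (\<lambda>\<omega>. P (chain s \<omega> t))"
  using measurable_chain_compose[of "\<lambda>e \<omega>. P e"] by simp

lemma pred_bdd_above_chain:
  fixes Z :: "'s \<Rightarrow> real"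
  shows "Measurable.pred S (\<lambda>\<omega>. bdd_above (range (\<lambda>t. Z (chain s \<omega> t))))"
  unfolding bdd_above_range_iff_nat by (intro pred_intros_countable pred_chain)

lemma AE_chain_shift:
  assumes ae: "\<And>e. AE \<omega> in S. R e \<omega>" and meas: "\<And>e. Measurable.pred S (R e)"
  shows "AE \<omega> in S. R (chain s \<omega> T) (sdrop T \<omega>)"
proof (induction T arbitrary: s)
  case 0
  show ?case using ae[of s] by simp
next
  case (Suc T)
  have "Measurable.pred S (\<lambda>\<omega>. R (chain s \<omega> (Suc T)) (sdrop (Suc T) \<omega>))"
    by (rule measurable_chain_compose[of "\<lambda>e \<omega>. R e (sdrop (Suc T) \<omega>)"]) (use meas in measurable)
  moreover have "AE \<omega> in S. R (chain s (x ## \<omega>) (Suc T)) (sdrop (Suc T) (x ## \<omega>))" for x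
    using Suc.IH[of "f s x"] by (simp del: chain.simps(2) add: chain_Stream)
  ultimately show ?case
    by (subst AE_stream_space) auto
qed

lemma AE_chain_all_times:
  assumes "\<And>e. AE \<omega> in S. R e \<omega>" and "\<And>e. Measurable.pred S (R e)"
  shows "AE \<omega> in S. \<forall>T. R (chain s \<omega> T) (sdrop T \<omega>)"
  unfolding AE_all_countable using AE_chain_shift[of R, OF assms] by blast

lemma sets_chain_all: "{\<omega>\<in>space S. \<forall>t\<le>N. Q (chain s \<omega> t)} \<in> sets S"
  by (rule predE) (intro pred_intros_countable pred_intros_logic pred_chain)

lemma sets_chain_ex: "{\<omega>\<in>space S. \<exists>t\<le>N. Q (chain s \<omega> t)} \<in> sets S"
  by (rule predE) (intro pred_intros_countable pred_intros_logic pred_chain)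

lemma emeasure_chain_all_Suc:
  assumes "Q s"
  shows "emeasure S {\<omega>\<in>space S. \<forall>t\<le>Suc N. Q (chain s \<omega> t)}
    = (\<integral>\<^sup>+x. emeasure S {\<omega>\<in>space S. \<forall>t\<le>N. Q (chain (f s x) \<omega> t)} \<partial>M)"
  using assms by (subst emeasure_stream_space[OF sets_chain_all])
    (auto intro!: nn_integral_cong simp: stream_space_Stream all_chain_Stream[where Q = Q])

lemma emeasure_chain_ex_Suc:
  assumes "\<not> Q s"
  shows "emeasure S {\<omega>\<in>space S. \<exists>t\<le>Suc N. Q (chain s \<omega> t)}
    = (\<integral>\<^sup>+x. emeasure S {\<omega>\<in>space S. \<exists>t\<le>N. Q (chain (f s x) \<omega> t)} \<partial>M)"
  using assms by (subst emeasure_stream_space[OF sets_chain_ex])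
    (auto intro!: nn_integral_cong simp: stream_space_Stream ex_chain_Stream[where Q = Q])

lemma emeasure_chain_exceeds_within_le:
  fixes Z :: "'s \<Rightarrow> real"
  assumes invariant: "\<And>e x. e \<in> P \<Longrightarrow> x \<in> space M \<Longrightarrow> f e x \<in> P"
    and nonneg: "\<And>e. e \<in> P \<Longrightarrow> 0 \<le> Z e"
    and supermartingale: "\<And>e. e \<in> P \<Longrightarrow> (\<integral>\<^sup>+x. ennreal (Z (f e x)) \<partial>M) \<le> ennreal (Z e)"
    and "s \<in> P" and c: "0 < c"
  shows "emeasure S {\<omega>\<in>space S. \<exists>t\<le>N. c \<le> Z (chain s \<omega> t)} \<le> ennreal (Z s / c)"
proof -
  have trivial: "emeasure S X \<le> ennreal (Z s / c)" if "c \<le> Z s" for X s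
  proof -
    have "emeasure S X \<le> ennreal 1"
      using prob_space.emeasure_le_1[OF prob_space_stream_space] by simp
    also have "\<dots> \<le> ennreal (Z s / c)" using that c by (intro ennreal_leI) simp
    finally show ?thesis .
  qed
  show ?thesis
    using \<open>s \<in> P\<close>
  proof (induction N arbitrary: s)
    case 0
    show ?case by (cases "c \<le> Z s") (simp_all add: trivial)
  next
    case (Suc N)
    show ?case
    proof (cases "c \<le> Z s")
      case False
      have "emeasure S {\<omega>\<in>space S. \<exists>t\<le>Suc N. c \<le> Z (chain s \<omega> t)}
          = (\<integral>\<^sup>+x. emeasure S {\<omega>\<in>space S. \<exists>t\<le>N. c \<le> Z (chain (f s x) \<omega> t)} \<partial>M)"
        using False by (rule emeasure_chain_ex_Suc)
      also have "\<dots> \<le> (\<integral>\<^sup>+x. ennreal (Z (f s x)) / ennreal c \<partial>M)"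
        using Suc.IH invariant[OF Suc.prems] nonneg invariant[OF Suc.prems] c
        by (intro nn_integral_mono) (simp add: divide_ennreal)
      also have "\<dots> = (\<integral>\<^sup>+x. ennreal (Z (f s x)) \<partial>M) / ennreal c"
      proof (rule nn_integral_divide)
        have "(\<lambda>x. Z (f s x)) \<in> borel_measurable M"
          by (rule measurable_compose[OF measurable_transition]) simp
        then show "(\<lambda>x. ennreal (Z (f s x))) \<in> borel_measurable M" by measurable
      qed
      also have "\<dots> \<le> ennreal (Z s) / ennreal c"
        using supermartingale[OF Suc.prems] by (rule divide_right_mono_ennreal)
      also have "\<dots> = ennreal (Z s / c)"
        using nonneg[OF Suc.prems] c by (simp add: divide_ennreal)
      finally show ?thesis .
    qed (rule trivial)
  qed
qed

lemma emeasure_chain_exceeds_le: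
  fixes Z :: "'s \<Rightarrow> real"
  assumes "\<And>e x. e \<in> P \<Longrightarrow> x \<in> space M \<Longrightarrow> f e x \<in> P"
    and "\<And>e. e \<in> P \<Longrightarrow> 0 \<le> Z e"
    and "\<And>e. e \<in> P \<Longrightarrow> (\<integral>\<^sup>+x. ennreal (Z (f e x)) \<partial>M) \<le> ennreal (Z e)"
    and "s \<in> P" and "0 < c"
  shows "emeasure S {\<omega>\<in>space S. \<exists>t. c \<le> Z (chain s \<omega> t)} \<le> ennreal (Z s / c)"
proof -
  define E where "E N = {\<omega>\<in>space S. \<exists>t\<le>N. c \<le> Z (chain s \<omega> t)}" for N
  have "incseq E"
    unfolding incseq_def E_def by (blast intro: order_trans)
  moreover have "E N \<in> sets S" for N
    unfolding E_def by (rule sets_chain_ex)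
  ultimately have "emeasure S (\<Union>N. E N) = (SUP N. emeasure S (E N))"
    by (intro SUP_emeasure_incseq[symmetric]) auto
  also have "\<dots> \<le> ennreal (Z s / c)"
    unfolding E_def using emeasure_chain_exceeds_within_le[OF assms] by (rule SUP_least)
  also have "(\<Union>N. E N) = {\<omega>\<in>space S. \<exists>t. c \<le> Z (chain s \<omega> t)}"
    unfolding E_def by auto
  finally show ?thesis .
qed

lemma AE_chain_bounded:
  fixes Z :: "'s \<Rightarrow> real"
  assumes invariant: "\<And>e x. e \<in> P \<Longrightarrow> x \<in> space M \<Longrightarrow> f e x \<in> P"
    and nonneg: "\<And>e. e \<in> P \<Longrightarrow> 0 \<le> Z e"
    and supermartingale: "\<And>e. e \<in> P \<Longrightarrow> (\<integral>\<^sup>+x. ennreal (Z (f e x)) \<partial>M) \<le> ennreal (Z e)"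
    and "s \<in> P"
  shows "AE \<omega> in S. bdd_above (range (\<lambda>t. Z (chain s \<omega> t)))"
proof (rule AE_I)
  define N where "N = {\<omega>\<in>space S. \<forall>C::nat. \<exists>t. real C \<le> Z (chain s \<omega> t)}"
  show "{\<omega>\<in>space S. \<not> bdd_above (range (\<lambda>t. Z (chain s \<omega> t)))} \<subseteq> N"
    unfolding N_def bdd_above_range_iff_nat by (auto intro: less_imp_le simp: not_le)
  show N_sets: "N \<in> sets S"
    unfolding N_def by (rule predE) (intro pred_intros_countable pred_chain)
  have "emeasure S N \<le> ennreal e" if "0 < e" for e
  proof -
    define C :: nat where "C = nat \<lceil>Z s / e\<rceil> + 1"
    have C_pos: "0 < real C" unfolding C_def by simp
    have "Z s / e \<le> real C" unfolding C_def by linarith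
    then have C_le: "Z s / real C \<le> e" using that C_pos by (simp add: field_simps)
    have "emeasure S N \<le> emeasure S {\<omega>\<in>space S. \<exists>t. real C \<le> Z (chain s \<omega> t)}"
      unfolding N_def by (rule emeasure_mono) (auto intro!: predE pred_intros_countable pred_chain)
    also have "\<dots> \<le> ennreal (Z s / real C)"
      using emeasure_chain_exceeds_le[OF assms C_pos] .
    also have "\<dots> \<le> ennreal e" using C_le by (rule ennreal_leI)
    finally show ?thesis .
  qed
  then have "emeasure S N \<le> 0"
    using ennreal_le_epsilon[where x = "emeasure S N" and y = 0] by simp
  then show "emeasure S N = 0" by simp
qed

lemma emeasure_chain_stays_le:
  fixes w :: "'s \<Rightarrow> real"
  assumes c: "0 < c" "\<And>e. e \<in> P \<Longrightarrow> c \<le> w e" and \<delta>: "0 \<le> \<delta>"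
    and w_step: "\<And>e x. e \<in> P \<Longrightarrow> x \<in> space M \<Longrightarrow> w (f e x) \<le> w e + \<delta>"
    and stay: "\<And>e. e \<in> P \<Longrightarrow> emeasure M {x\<in>space M. f e x \<in> P} \<le> ennreal (1 - c / w e)"
    and start: "s \<in> P" "w s \<le> b"
  shows "emeasure S {\<omega>\<in>space S. \<forall>t\<le>N. chain s \<omega> t \<in> P}
    \<le> ennreal (\<Prod>t<N. 1 - c / (b + \<delta> * real t))"
  using start
proof (induction N arbitrary: s b)
  case 0
  show ?case using prob_space.emeasure_le_1[OF prob_space_stream_space] by simp
next
  case (Suc N)
  define E where "E s N = {\<omega>\<in>space S. \<forall>t\<le>N. chain s \<omega> t \<in> P}" for s N
  define K where "K = (\<Prod>t<N. 1 - c / ((b + \<delta>) + \<delta> * real t))"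
  have "c \<le> b + \<delta>" using c(2)[OF Suc.prems(1)] Suc.prems(2) \<delta> by linarith
  then have K_nonneg: "0 \<le> K"
    unfolding K_def using c(1) \<delta> by (intro prod_nonneg harmonic_factor_nonneg) auto
  have "emeasure S (E s (Suc N)) = (\<integral>\<^sup>+x. emeasure S (E (f s x) N) \<partial>M)"
    unfolding E_def using Suc.prems(1) by (rule emeasure_chain_all_Suc)
  also have "\<dots> \<le> (\<integral>\<^sup>+x. ennreal K * indicator {x\<in>space M. f s x \<in> P} x \<partial>M)"
  proof (intro nn_integral_mono)
    fix x assume x: "x \<in> space M"
    show "emeasure S (E (f s x) N) \<le> ennreal K * indicator {x\<in>space M. f s x \<in> P} x"
    proof (cases "f s x \<in> P")
      case True
      then show ?thesis
        using Suc.IH[of "f s x" "b + \<delta>"] w_step[OF Suc.prems(1) x] Suc.prems(2) x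
        by (simp add: E_def K_def)
    next
      case False
      then have "E (f s x) N = {}" unfolding E_def by force
      then show ?thesis by simp
    qed
  qed
  also have "\<dots> = ennreal K * emeasure M {x\<in>space M. f s x \<in> P}"
    using measurable_sets[OF measurable_transition[of s], of "P"]
    by (subst nn_integral_cmult_indicator) (auto simp: Int_def conj_commute vimage_def)
  also have "\<dots> \<le> ennreal K * ennreal (1 - c / w s)"
    using stay[OF Suc.prems(1)] by (rule mult_left_mono) simp
  also have "\<dots> \<le> ennreal K * ennreal (1 - c / b)"
  proof -
    have "0 < w s" using c(1) c(2)[OF Suc.prems(1)] by linarith
    then have "c / b \<le> c / w s" using c(1) Suc.prems(2) by (intro divide_left_mono) auto
    then show ?thesis by (intro mult_left_mono ennreal_leI) auto
  qed
  also have "\<dots> = ennreal ((1 - c / b) * K)"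
    using K_nonneg by (subst ennreal_mult'') (auto simp: mult.commute)
  also have "(1 - c / b) * K = (\<Prod>t<Suc N. 1 - c / (b + \<delta> * real t))"
    unfolding K_def prod.lessThan_Suc_shift by (simp add: algebra_simps)
  finally show ?case unfolding E_def .
qed

lemma AE_chain_leaves:
  fixes w :: "'s \<Rightarrow> real"
  assumes c: "0 < c" "\<And>e. e \<in> P \<Longrightarrow> c \<le> w e" and \<delta>: "0 \<le> \<delta>"
    and w_step: "\<And>e x. e \<in> P \<Longrightarrow> x \<in> space M \<Longrightarrow> w (f e x) \<le> w e + \<delta>"
    and stay: "\<And>e. e \<in> P \<Longrightarrow> emeasure M {x\<in>space M. f e x \<in> P} \<le> ennreal (1 - c / w e)"
    and "s \<in> P"
  shows "AE \<omega> in S. \<exists>t. chain s \<omega> t \<notin> P"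
proof (rule AE_I)
  define N where "N = {\<omega>\<in>space S. \<forall>t. chain s \<omega> t \<in> P}"
  show "{\<omega>\<in>space S. \<not> (\<exists>t. chain s \<omega> t \<notin> P)} \<subseteq> N"
    unfolding N_def by auto
  show "N \<in> sets S"
    unfolding N_def by (rule predE) (intro pred_intros_countable pred_chain)
  have "emeasure S N \<le> ennreal e" if "0 < e" for e
  proof -
    have "(\<lambda>K. \<Prod>t<K. 1 - c / (w s + \<delta> * real t)) \<longlonglongrightarrow> 0"
      using c \<delta> \<open>s \<in> P\<close> by (intro harmonic_product_tendsto_zero) auto
    from order_tendstoD(2)[OF this that]
    obtain K where K: "(\<Prod>t<K. 1 - c / (w s + \<delta> * real t)) < e"
      by (auto simp: eventually_sequentially)
    have "emeasure S N \<le> emeasure S {\<omega>\<in>space S. \<forall>t\<le>K. chain s \<omega> t \<in> P}"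
      unfolding N_def by (intro emeasure_mono sets_chain_all) auto
    also have "\<dots> \<le> ennreal (\<Prod>t<K. 1 - c / (w s + \<delta> * real t))"
      by (rule emeasure_chain_stays_le[OF c \<delta> w_step stay \<open>s \<in> P\<close> order_refl])
    also have "\<dots> \<le> ennreal e" using K by (intro ennreal_leI) simp
    finally show ?thesis .
  qed
  then have "emeasure S N \<le> 0"
    using ennreal_le_epsilon[where x = "emeasure S N" and y = 0] by simp
  then show "emeasure S N = 0" by simp
qed

end

section \<open>The one-step distribution of the market\<close>

lemma sets_unit_unif [measurable_cong]: "sets unit_unif = sets borel"
  unfolding unit_unif_def by simp

lemma space_unit_unif [simp]: "space unit_unif = UNIV"
  unfolding unit_unif_def by simp

lemma prob_space_unit_unif: "prob_space unit_unif"
  unfolding unit_unif_def by (intro prob_space_uniform_measure) auto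

text \<open>Discarding the null endpoint 1 avoids the default branch of \<open>chosen\<close>.\<close>

lemma emeasure_unit_unif:
  assumes B: "B \<in> sets borel"
  shows "emeasure unit_unif B = emeasure lborel ({0..<1} \<inter> B)"
proof -
  have "emeasure unit_unif B = emeasure lborel ({0..1} \<inter> B)"
    unfolding unit_unif_def using B by (subst emeasure_uniform_measure) (auto simp: divide_ennreal_def)
  also have "{0..1} \<inter> B = ({0..<1} \<inter> B) \<union> ({1} \<inter> B)" by auto
  also have "emeasure lborel \<dots> = emeasure lborel ({0..<1} \<inter> B)"
  proof (rule emeasure_Un_null_set)
    show "{0..<1} \<inter> B \<in> sets lborel" using B by simp
    show "{1} \<inter> B \<in> null_sets lborel" by (rule null_sets_subset[of "{1}"]) (use B in auto)
  qed
  finally show ?thesis .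
qed

lemma emeasure_unit_unif_less:
  "0 \<le> c \<Longrightarrow> c \<le> 1 \<Longrightarrow> emeasure unit_unif {w. w < c} = ennreal c"
proof -
  assume "0 \<le> c" "c \<le> 1"
  then have "{0..<1} \<inter> {w::real. w < c} = {0..<c}" by auto
  with \<open>0 \<le> c\<close> show ?thesis by (simp add: emeasure_unit_unif)
qed

definition step_space :: "(real \<times> real) measure" where
  "step_space = unit_unif \<Otimes>\<^sub>M unit_unif"

lemma sets_step_space [measurable_cong]: "sets step_space = sets (borel \<Otimes>\<^sub>M borel)"
  unfolding step_space_def by (intro sets_pair_measure_cong sets_unit_unif)

lemma space_step_space [simp]: "space step_space = UNIV"
  unfolding step_space_def by (simp add: space_pair_measure)

lemma prob_space_step_space: "prob_space step_space"
  unfolding step_space_def by (intro prob_space_pair prob_space_unit_unif)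

lemma emeasure_step_space_Times:
  assumes "A \<in> sets borel" "B \<in> sets borel"
  shows "emeasure step_space (A \<times> B) = emeasure unit_unif A * emeasure unit_unif B"
  unfolding step_space_def using assms
  by (intro prob_space_imp_sigma_finite prob_space_unit_unif
      sigma_finite_measure.emeasure_pair_measure_Times) (auto simp: sets_unit_unif)

lemma market_space_eq: "market_space = stream_space step_space"
  unfolding market_space_def step_space_def ..

locale market =
  fixes n :: nat and v A q :: "nat \<Rightarrow> real"
  assumes n_pos: "1 \<le> n"
    and v_pos: "\<And>i. i \<in> {1..n} \<Longrightarrow> 0 < v i"
    and A_pos: "\<And>i. i \<in> {1..n} \<Longrightarrow> 0 < A i"
    and q_prob: "\<And>i. i \<in> {1..n} \<Longrightarrow> 0 \<le> q i \<and> q i \<le> 1"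
begin

abbreviation step :: "(nat \<Rightarrow> nat) \<Rightarrow> real \<times> real \<Rightarrow> (nat \<Rightarrow> nat)" where
  "step \<equiv> market_step n v A q"

abbreviation cum :: "(nat \<Rightarrow> nat) \<Rightarrow> nat \<Rightarrow> real" where
  "cum \<equiv> cum_prob n v A"

definition buy :: "(nat \<Rightarrow> nat) \<Rightarrow> nat \<Rightarrow> (nat \<Rightarrow> nat)" where
  "buy d i = d(i := Suc (d i))"

definition weight :: "(nat \<Rightarrow> nat) \<Rightarrow> real" where
  "weight d = (\<Sum>k\<in>{1..n}. v k * (A k + real (d k)))"

lemma weight_pos: "0 < weight d"
  unfolding weight_def using n_pos v_pos A_pos
  by (intro sum_pos) (auto intro!: mult_pos_pos add_pos_nonneg)

lemma try_prob_eq: "try_prob n v A d i = v i * (A i + real (d i)) / weight d"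
  unfolding try_prob_def weight_def ..

lemma try_prob_pos: "i \<in> {1..n} \<Longrightarrow> 0 < try_prob n v A d i"
  unfolding try_prob_eq using weight_pos[of d] v_pos A_pos
  by (auto intro!: divide_pos_pos mult_pos_pos add_pos_nonneg)

lemma cum_Suc: "cum d (Suc i) = cum d i + try_prob n v A d (Suc i)"
  unfolding cum_prob_def by simp

lemma cum_n: "cum d n = 1"
  unfolding cum_prob_def try_prob_eq using weight_pos[of d]
  by (simp add: sum_divide_distrib[symmetric] weight_def)

lemma cum_mono: "a \<le> b \<Longrightarrow> b \<le> n \<Longrightarrow> cum d a \<le> cum d b"
  unfolding cum_prob_def by (rule sum_mono2) (auto intro: less_imp_le[OF try_prob_pos])

lemma cum_bounds: "i \<le> n \<Longrightarrow> 0 \<le> cum d i \<and> cum d i \<le> 1"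
  using cum_mono[of 0 i d] cum_mono[of i n d] cum_n by (simp add: cum_prob_def)

lemma chosen_eq_iff:
  assumes u: "0 \<le> u" "u < 1" and i: "i \<in> {1..n}"
  shows "chosen n v A d u = i \<longleftrightarrow> cum d (i - 1) \<le> u \<and> u < cum d i"
proof -
  have ex: "\<exists>k. k \<in> {1..n} \<and> u < cum d k"
    using u n_pos cum_n by (intro exI[of _ n]) auto
  then have chosen: "chosen n v A d u = (LEAST k. k \<in> {1..n} \<and> u < cum d k)"
    unfolding chosen_def by auto
  show ?thesis
  proof
    assume "chosen n v A d u = i"
    then have least: "(LEAST k. k \<in> {1..n} \<and> u < cum d k) = i" using chosen by simp
    have "cum d (i - 1) \<le> u"
    proof (cases "i = 1")
      case True then show ?thesis using u by (simp add: cum_prob_def)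
    next
      case False
      then have "\<not> (i - 1 \<in> {1..n} \<and> u < cum d (i - 1))"
        using not_less_Least[of "i - 1" "\<lambda>k. k \<in> {1..n} \<and> u < cum d k"] least i by auto
      then show ?thesis using False i by auto
    qed
    moreover have "u < cum d i" using LeastI_ex[OF ex] least by simp
    ultimately show "cum d (i - 1) \<le> u \<and> u < cum d i" ..
  next
    assume bounds: "cum d (i - 1) \<le> u \<and> u < cum d i"
    have "(LEAST k. k \<in> {1..n} \<and> u < cum d k) = i"
    proof (rule Least_equality)
      show "i \<in> {1..n} \<and> u < cum d i" using i bounds by simp
      fix k assume k: "k \<in> {1..n} \<and> u < cum d k"
      show "i \<le> k"
      proof (rule ccontr)
        assume "\<not> i \<le> k"
        then have "cum d k \<le> cum d (i - 1)" using i by (intro cum_mono) auto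
        then show False using k bounds by simp
      qed
    qed
    then show "chosen n v A d u = i" using chosen by simp
  qed
qed

lemma chosen_in_range: "chosen n v A d u \<in> {1..n}"
  unfolding chosen_def using n_pos by (auto intro: LeastI2_wellorder)

lemma measurable_chosen: "chosen n v A d \<in> borel \<rightarrow>\<^sub>M count_space UNIV"
  unfolding chosen_def by measurable

lemma sets_chosen: "{u. chosen n v A d u = i} \<in> sets borel"
  using measurable_sets[OF measurable_chosen[of d], of "{i}"] by (simp add: vimage_def)

lemma emeasure_chosen:
  assumes i: "i \<in> {1..n}"
  shows "emeasure unit_unif {u. chosen n v A d u = i} = ennreal (try_prob n v A d i)"
proof -
  have bounds: "0 \<le> cum d (i - 1)" "cum d i \<le> 1"
    using cum_bounds[of "i - 1" d] cum_bounds[of i d] i by auto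
  have "{0..<1} \<inter> {u. chosen n v A d u = i} = {cum d (i - 1)..<cum d i}"
  proof (rule set_eqI)
    fix u
    show "u \<in> {0..<1} \<inter> {u. chosen n v A d u = i} \<longleftrightarrow> u \<in> {cum d (i - 1)..<cum d i}"
    proof (cases "0 \<le> u \<and> u < 1")
      case True
      then show ?thesis using chosen_eq_iff[of u i d] i by auto
    next
      case False
      then show ?thesis using bounds by auto
    qed
  qed
  moreover have "cum d i - cum d (i - 1) = try_prob n v A d i"
    using cum_Suc[of d "i - 1"] i by simp
  ultimately show ?thesis
    using cum_mono[of "i - 1" i d] i by (simp add: emeasure_unit_unif sets_chosen)
qed

lemma step_eq: "step d x = (let i = chosen n v A d (fst x) in if snd x < q i then buy d i else d)"
  unfolding market_step_def buy_def ..

lemma step_cases: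
  obtains "step d x = d" | i where "i \<in> {1..n}" "step d x = buy d i"
  using chosen_in_range[of d "fst x"] unfolding step_eq Let_def
  by (cases "snd x < q (chosen n v A d (fst x))") (auto intro: that)

lemma measurable_step: "step d \<in> step_space \<rightarrow>\<^sub>M count_space UNIV"
proof -
  have "(\<lambda>x. (\<lambda>i x. if snd x < q i then buy d i else d) (chosen n v A d (fst x)) x)
      \<in> step_space \<rightarrow>\<^sub>M count_space UNIV"
    by (rule measurable_compose_countable) (use measurable_chosen[of d] in measurable)
  then show ?thesis unfolding step_eq Let_def .
qed

lemma finite_step_image: "finite (step d ` space step_space)"
proof (rule finite_subset)
  show "step d ` space step_space \<subseteq> insert d (buy d ` {1..n})"
  proof
    fix y assume "y \<in> step d ` space step_space"
    then obtain x where "y = step d x" by auto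
    then show "y \<in> insert d (buy d ` {1..n})" by (cases rule: step_cases[of d x]) auto
  qed
qed simp

sublocale iid_chain step_space step
  by (intro iid_chain.intro iid_chain_axioms.intro prob_space_step_space measurable_step
      finite_step_image)

lemma purchases_eq_chain: "purchases n v A q \<omega> t = chain (\<lambda>i. 0) \<omega> t"
  by (induction t) simp_all

definition purchase_prob :: "(nat \<Rightarrow> nat) \<Rightarrow> nat \<Rightarrow> real" where
  "purchase_prob d i = try_prob n v A d i * q i"

definition purchase_event :: "(nat \<Rightarrow> nat) \<Rightarrow> nat \<Rightarrow> (real \<times> real) set" where
  "purchase_event d i = {u. chosen n v A d u = i} \<times> {w. w < q i}"

lemma purchase_prob_nonneg: "i \<in> {1..n} \<Longrightarrow> 0 \<le> purchase_prob d i"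
  unfolding purchase_prob_def using try_prob_pos[of i d] q_prob[of i] by simp

lemma sum_purchase_prob_le_1: "(\<Sum>i\<in>{1..n}. purchase_prob d i) \<le> 1"
proof -
  have "(\<Sum>i\<in>{1..n}. purchase_prob d i) \<le> (\<Sum>i\<in>{1..n}. try_prob n v A d i)"
    unfolding purchase_prob_def using try_prob_pos q_prob
    by (intro sum_mono) (auto intro!: mult_left_le less_imp_le)
  also have "\<dots> = 1" using cum_n[of d] unfolding cum_prob_def .
  finally show ?thesis .
qed

lemma sets_purchase_event: "purchase_event d i \<in> sets step_space"
  unfolding purchase_event_def using sets_chosen by (simp add: sets_step_space)

lemma emeasure_purchase_event:
  "i \<in> {1..n} \<Longrightarrow> emeasure step_space (purchase_event d i) = ennreal (purchase_prob d i)"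
  unfolding purchase_event_def purchase_prob_def using try_prob_pos[of i d] q_prob[of i]
  by (simp add: emeasure_step_space_Times sets_chosen emeasure_chosen emeasure_unit_unif_less
      ennreal_mult)

lemma disjoint_purchase_events: "disjoint_family_on (purchase_event d) {1..n}"
  unfolding disjoint_family_on_def purchase_event_def by blast

definition no_purchase :: "(nat \<Rightarrow> nat) \<Rightarrow> (real \<times> real) set" where
  "no_purchase d = space step_space - (\<Union>i\<in>{1..n}. purchase_event d i)"

lemma emeasure_no_purchase:
  "emeasure step_space (no_purchase d) = ennreal (1 - (\<Sum>i\<in>{1..n}. purchase_prob d i))"
proof -
  have "emeasure step_space (\<Union>i\<in>{1..n}. purchase_event d i)
      = (\<Sum>i\<in>{1..n}. ennreal (purchase_prob d i))"
    using sets_purchase_event disjoint_purchase_events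
    by (subst sum_emeasure[symmetric]) (auto simp: emeasure_purchase_event)
  also have "\<dots> = ennreal (\<Sum>i\<in>{1..n}. purchase_prob d i)"
    using purchase_prob_nonneg by (intro sum_ennreal) auto
  finally have "emeasure step_space (no_purchase d) = 1 - ennreal (\<Sum>i\<in>{1..n}. purchase_prob d i)"
    unfolding no_purchase_def using sets_purchase_event
    by (subst emeasure_compl) (auto simp: emeasure_space_1[simplified])
  also have "\<dots> = ennreal (1 - (\<Sum>i\<in>{1..n}. purchase_prob d i))"
    using ennreal_minus[of "\<Sum>i\<in>{1..n}. purchase_prob d i" 1]
      sum_nonneg[of "{1..n}" "purchase_prob d", OF purchase_prob_nonneg] by simp
  finally show ?thesis .
qed

lemma step_indicator_split:
  "ennreal (F (step d x)) = (\<Sum>i\<in>{1..n}. ennreal (F (buy d i)) * indicator (purchase_event d i) x)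
     + ennreal (F d) * indicator (no_purchase d) x"
proof -
  define c where "c = chosen n v A d (fst x)"
  have c: "c \<in> {1..n}" unfolding c_def by (rule chosen_in_range)
  have event: "x \<in> purchase_event d i \<longleftrightarrow> i = c \<and> snd x < q c" for i
    unfolding purchase_event_def c_def by (cases x) auto
  show ?thesis
  proof (cases "snd x < q c")
    case True
    then have "step d x = buy d c" unfolding step_eq c_def[symmetric] Let_def by simp
    moreover have "x \<notin> no_purchase d" unfolding no_purchase_def using c True event by auto
    ultimately show ?thesis using c True by (simp add: indicator_def event if_distrib cong: if_cong)
  next
    case False
    then have "step d x = d" unfolding step_eq c_def[symmetric] Let_def by simp
    moreover have "x \<in> no_purchase d" unfolding no_purchase_def using False event by auto
    ultimately show ?thesis using False by (simp add: indicator_def event)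
  qed
qed

lemma nn_integral_step:
  assumes F: "\<And>e. 0 \<le> F e"
  shows "(\<integral>\<^sup>+x. ennreal (F (step d x)) \<partial>step_space) =
    ennreal ((\<Sum>i\<in>{1..n}. purchase_prob d i * F (buy d i))
      + (1 - (\<Sum>i\<in>{1..n}. purchase_prob d i)) * F d)"
proof -
  have sets: "purchase_event d i \<in> sets step_space" "no_purchase d \<in> sets step_space" for i
    using sets_purchase_event unfolding no_purchase_def
    by (auto intro!: sets.Diff sets.top sets.finite_UN simp del: space_step_space)
  have buy: "(\<Sum>i\<in>{1..n}. ennreal (F (buy d i)) * ennreal (purchase_prob d i))
      = ennreal (\<Sum>i\<in>{1..n}. purchase_prob d i * F (buy d i))"
    using F purchase_prob_nonneg
    by (subst sum_ennreal[symmetric]) (auto intro!: sum.cong simp: ennreal_mult'' mult.commute)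
  have no_buy: "ennreal (F d) * ennreal (1 - (\<Sum>i\<in>{1..n}. purchase_prob d i))
      = ennreal ((1 - (\<Sum>i\<in>{1..n}. purchase_prob d i)) * F d)"
    using F sum_purchase_prob_le_1[of d] by (simp add: ennreal_mult'' mult.commute)
  have "(\<integral>\<^sup>+x. ennreal (F (step d x)) \<partial>step_space) =
      (\<Sum>i\<in>{1..n}. ennreal (F (buy d i)) * ennreal (purchase_prob d i))
      + ennreal (F d) * ennreal (1 - (\<Sum>i\<in>{1..n}. purchase_prob d i))"
    unfolding step_indicator_split using sets
    by (simp add: nn_integral_add nn_integral_sum nn_integral_cmult_indicator
        emeasure_purchase_event emeasure_no_purchase del: sum_mult_indicator)
  also have "\<dots> = ennreal ((\<Sum>i\<in>{1..n}. purchase_prob d i * F (buy d i))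
      + (1 - (\<Sum>i\<in>{1..n}. purchase_prob d i)) * F d)"
  proof -
    have "0 \<le> (\<Sum>i\<in>{1..n}. purchase_prob d i * F (buy d i))"
      using F by (intro sum_nonneg) (simp add: purchase_prob_nonneg)
    moreover have "0 \<le> (1 - (\<Sum>i\<in>{1..n}. purchase_prob d i)) * F d"
      using F sum_purchase_prob_le_1[of d] by simp
    ultimately show ?thesis unfolding buy no_buy by (rule ennreal_plus[symmetric])
  qed
  finally show ?thesis .
qed

lemma weight_buy: "i \<in> {1..n} \<Longrightarrow> weight (buy d i) = weight d + v i"
proof -
  assume i: "i \<in> {1..n}"
  have "weight (buy d i) = (\<Sum>k\<in>{1..n}. v k * (A k + real (d k)) + (if k = i then v i else 0))"
    unfolding weight_def buy_def by (intro sum.cong refl) (auto simp: algebra_simps)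
  also have "\<dots> = weight d + v i" using i by (simp add: sum.distrib weight_def)
  finally show ?thesis .
qed

definition vmax :: real where
  "vmax = Max (v ` {1..n})"

lemma v_le_vmax: "i \<in> {1..n} \<Longrightarrow> v i \<le> vmax"
  unfolding vmax_def by (intro Max_ge) auto

lemma vmax_nonneg: "0 \<le> vmax"
  using n_pos v_pos[of 1] v_le_vmax[of 1] by simp

lemma weight_step_le: "weight (step d x) \<le> weight d + vmax"
  using weight_buy v_le_vmax vmax_nonneg by (cases rule: step_cases[of d x]) auto

end

section \<open>Two quality tiers\<close>

locale two_tier_market = market +
  fixes j :: nat and qp qm :: real
  assumes j_range: "1 \<le> j" "j < n"
    and qm_nonneg: "0 \<le> qm" and qm_less_qp: "qm < qp"
    and top_quality: "\<And>i. i \<in> {1..j} \<Longrightarrow> v i * q i = qp"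
    and low_quality: "\<And>i. i \<in> {j+1..n} \<Longrightarrow> v i * q i = qm"
begin

definition top_appeal :: "(nat \<Rightarrow> nat) \<Rightarrow> real" where
  "top_appeal d = (\<Sum>i\<in>{1..j}. A i + real (d i))"

definition low_appeal :: "(nat \<Rightarrow> nat) \<Rightarrow> real" where
  "low_appeal d = (\<Sum>i\<in>{j+1..n}. A i + real (d i))"

definition low_share :: "(nat \<Rightarrow> nat) \<Rightarrow> real" where
  "low_share d = (\<Sum>i\<in>{j+1..n}. real (d i)) / (\<Sum>i\<in>{1..n}. real (d i))"

definition \<beta> :: real where
  "\<beta> = (qp + qm) / (2 * qp)"

definition threshold :: real where
  "threshold = 2 * qm / (qp - qm)"

definition potential :: "(nat \<Rightarrow> nat) \<Rightarrow> real" where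
  "potential d = low_appeal d / top_appeal d powr \<beta>"

lemma qp_pos: "0 < qp"
  using qm_nonneg qm_less_qp by simp

lemma \<beta>_bounds: "0 \<le> \<beta>" "\<beta> < 1"
  unfolding \<beta>_def using qp_pos qm_nonneg qm_less_qp by (auto simp: field_simps)

lemma sum_tiers: "(\<Sum>i\<in>{1..n}. f i) = (\<Sum>i\<in>{1..j}. f i) + (\<Sum>i\<in>{j+1..n}. f i)"
proof -
  have "{1..n} = {1..j} \<union> {j+1..n}" using j_range by auto
  then show ?thesis by (simp add: sum.union_disjoint)
qed

lemma top_appeal_pos: "0 < top_appeal d"
  unfolding top_appeal_def using j_range A_pos by (intro sum_pos) (auto intro: add_pos_nonneg)

lemma low_appeal_pos: "0 < low_appeal d"
  unfolding low_appeal_def using j_range A_pos by (intro sum_pos) (auto intro: add_pos_nonneg)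

lemma potential_nonneg: "0 \<le> potential d"
  unfolding potential_def using low_appeal_pos[of d] by simp

lemma top_appeal_eq: "top_appeal d = top_appeal (\<lambda>_. 0) + real (\<Sum>i\<in>{1..j}. d i)"
  unfolding top_appeal_def by (simp add: sum.distrib)

lemma buy_top:
  assumes "i \<in> {1..j}"
  shows "top_appeal (buy d i) = top_appeal d + 1" "low_appeal (buy d i) = low_appeal d"
proof -
  have "top_appeal (buy d i) = (\<Sum>k\<in>{1..j}. A k + real (d k) + (if k = i then 1 else 0))"
    unfolding top_appeal_def buy_def by (intro sum.cong refl) auto
  then show "top_appeal (buy d i) = top_appeal d + 1"
    using assms by (simp add: sum.distrib top_appeal_def)
  show "low_appeal (buy d i) = low_appeal d"
    using assms unfolding low_appeal_def buy_def by (intro sum.cong) auto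
qed

lemma buy_low:
  assumes "i \<in> {j+1..n}"
  shows "low_appeal (buy d i) = low_appeal d + 1" "top_appeal (buy d i) = top_appeal d"
proof -
  have "low_appeal (buy d i) = (\<Sum>k\<in>{j+1..n}. A k + real (d k) + (if k = i then 1 else 0))"
    unfolding low_appeal_def buy_def by (intro sum.cong refl) auto
  then show "low_appeal (buy d i) = low_appeal d + 1"
    using assms by (simp add: sum.distrib low_appeal_def)
  show "top_appeal (buy d i) = top_appeal d"
    using assms unfolding top_appeal_def buy_def by (intro sum.cong) auto
qed

lemma top_appeal_step_mono: "top_appeal d \<le> top_appeal (step d x)"
proof (cases rule: step_cases[of d x])
  case (2 i)
  then have "i \<in> {1..j} \<or> i \<in> {j+1..n}" by auto
  then show ?thesis using 2 buy_top[of i d] buy_low[of i d] by auto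
qed simp

lemma top_appeal_chain_mono: "top_appeal (chain s \<omega> T) \<le> top_appeal (chain s \<omega> (T + t))"
  by (induction t) (auto intro: order_trans top_appeal_step_mono)

lemma sum_purchase_prob_top: "(\<Sum>i\<in>{1..j}. purchase_prob d i) = qp * top_appeal d / weight d"
proof -
  have "(\<Sum>i\<in>{1..j}. purchase_prob d i) = (\<Sum>i\<in>{1..j}. qp * (A i + real (d i)) / weight d)"
    using top_quality j_range by (intro sum.cong refl) (auto simp: purchase_prob_def try_prob_eq)
  then show ?thesis by (simp add: top_appeal_def sum_divide_distrib[symmetric] sum_distrib_left)
qed

lemma sum_purchase_prob_low: "(\<Sum>i\<in>{j+1..n}. purchase_prob d i) = qm * low_appeal d / weight d"
proof -
  have "(\<Sum>i\<in>{j+1..n}. purchase_prob d i) = (\<Sum>i\<in>{j+1..n}. qm * (A i + real (d i)) / weight d)"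
    using low_quality j_range by (intro sum.cong refl) (auto simp: purchase_prob_def try_prob_eq)
  then show ?thesis by (simp add: low_appeal_def sum_divide_distrib[symmetric] sum_distrib_left)
qed

lemma nn_integral_step_tiers:
  assumes F: "\<And>e. 0 \<le> F e"
    and top: "\<And>i. i \<in> {1..j} \<Longrightarrow> F (buy d i) = F_top"
    and low: "\<And>i. i \<in> {j+1..n} \<Longrightarrow> F (buy d i) = F_low"
  shows "(\<integral>\<^sup>+x. ennreal (F (step d x)) \<partial>step_space) = ennreal (F d
    + qp * top_appeal d / weight d * (F_top - F d) + qm * low_appeal d / weight d * (F_low - F d))"
proof -
  have "(\<Sum>i\<in>{1..n}. purchase_prob d i * F (buy d i))
      = (\<Sum>i\<in>{1..j}. purchase_prob d i) * F_top + (\<Sum>i\<in>{j+1..n}. purchase_prob d i) * F_low"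
    unfolding sum_tiers using top low by (simp add: sum_distrib_right)
  then have "(\<Sum>i\<in>{1..n}. purchase_prob d i * F (buy d i))
      + (1 - (\<Sum>i\<in>{1..n}. purchase_prob d i)) * F d
      = F d + qp * top_appeal d / weight d * (F_top - F d) + qm * low_appeal d / weight d * (F_low - F d)"
    unfolding sum_tiers[of "purchase_prob d"] sum_purchase_prob_top sum_purchase_prob_low
    using weight_pos[of d] by (simp add: field_simps)
  then show ?thesis using nn_integral_step[of F d, OF F] by simp
qed

text \<open>The drift of \<open>potential\<close> in a state with \<open>top_appeal d = h\<close> is a positive multiple of
  this coefficient.\<close>

lemma drift_coefficient_nonpos:
  assumes "threshold \<le> h" "0 < h"
  shows "qp * h * ((h / (h + 1)) powr \<beta> - 1) + qm \<le> 0"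
proof -
  have "h / (h + 1) = 1 - 1 / (h + 1)" using assms by (simp add: field_simps)
  then have "(h / (h + 1)) powr \<beta> \<le> 1 - \<beta> / (h + 1)"
    using assms \<beta>_bounds bernoulli_powr_le[of "1 / (h + 1)" \<beta>] by simp
  then have "qp * h * ((h / (h + 1)) powr \<beta> - 1) \<le> qp * h * (- \<beta> / (h + 1))"
    using qp_pos assms by (intro mult_left_mono) auto
  also have "\<dots> = - ((qp + qm) / 2) * h / (h + 1)"
    using qp_pos by (simp add: \<beta>_def)
  also have "\<dots> \<le> - qm"
  proof -
    have "2 * qm \<le> h * (qp - qm)"
      using assms qm_less_qp by (simp add: threshold_def field_simps)
    then show ?thesis using assms by (simp add: field_simps)
  qed
  finally show ?thesis by simp
qed

lemma nn_integral_potential_step_le: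
  assumes "threshold \<le> top_appeal d"
  shows "(\<integral>\<^sup>+x. ennreal (potential (step d x)) \<partial>step_space) \<le> ennreal (potential d)"
proof -
  define h l w where "h = top_appeal d" and "l = low_appeal d" and "w = weight d"
  have pos: "0 < h" "0 < l" "0 < w"
    unfolding h_def l_def w_def by (simp_all add: top_appeal_pos low_appeal_pos weight_pos)
  have top: "potential (buy d i) = l * (h / (h + 1)) powr \<beta> / h powr \<beta>" if "i \<in> {1..j}" for i
    using buy_top[OF that, of d] pos unfolding potential_def h_def l_def by (simp add: powr_divide)
  have low: "potential (buy d i) = (l + 1) / h powr \<beta>" if "i \<in> {j+1..n}" for i
    using buy_low[OF that, of d] unfolding potential_def h_def l_def by simp
  have "(\<integral>\<^sup>+x. ennreal (potential (step d x)) \<partial>step_space) = ennreal (potential d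
      + qp * h / w * (l * (h / (h + 1)) powr \<beta> / h powr \<beta> - potential d)
      + qm * l / w * ((l + 1) / h powr \<beta> - potential d))"
    unfolding h_def l_def w_def
    by (rule nn_integral_step_tiers) (auto simp: potential_nonneg top low h_def l_def)
  also have "\<dots> = ennreal (potential d
      + l / (w * h powr \<beta>) * (qp * h * ((h / (h + 1)) powr \<beta> - 1) + qm))"
    using pos unfolding potential_def h_def[symmetric] l_def[symmetric]
    by (simp add: field_simps)
  also have "\<dots> \<le> ennreal (potential d)"
  proof (intro ennreal_leI)
    have "qp * h * ((h / (h + 1)) powr \<beta> - 1) + qm \<le> 0"
      using drift_coefficient_nonpos assms pos by (simp add: h_def)
    moreover have "0 \<le> l / (w * h powr \<beta>)" using pos by simp
    ultimately show "potential d + l / (w * h powr \<beta>) * (qp * h * ((h / (h + 1)) powr \<beta> - 1) + qm)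
        \<le> potential d"
      using mult_nonneg_nonpos by fastforce
  qed
  finally show ?thesis .
qed

lemma qp_top_appeal_le_weight: "qp * top_appeal d \<le> weight d"
proof -
  have "qp * top_appeal d = (\<Sum>i\<in>{1..j}. q i * (v i * (A i + real (d i))))"
    unfolding top_appeal_def sum_distrib_left using top_quality
    by (intro sum.cong refl) (auto simp: algebra_simps)
  also have "\<dots> \<le> (\<Sum>i\<in>{1..j}. v i * (A i + real (d i)))"
  proof (rule sum_mono)
    fix i assume "i \<in> {1..j}"
    then have i: "i \<in> {1..n}" using j_range by auto
    show "q i * (v i * (A i + real (d i))) \<le> v i * (A i + real (d i))"
      using q_prob[OF i] v_pos[OF i] A_pos[OF i] by (intro mult_left_le_one_le) auto
  qed
  also have "\<dots> \<le> weight d"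
  proof -
    have "0 \<le> v i * (A i + real (d i))" if "i \<in> {1..n}" for i
      using v_pos[OF that] A_pos[OF that] by simp
    then have "0 \<le> (\<Sum>i\<in>{j+1..n}. v i * (A i + real (d i)))"
      using j_range by (intro sum_nonneg) auto
    then show ?thesis unfolding weight_def sum_tiers[of "\<lambda>k. v k * (A k + real (d k))"] by simp
  qed
  finally show ?thesis .
qed

lemma emeasure_top_appeal_unchanged:
  "emeasure step_space {x\<in>space step_space. top_appeal (step d x) = top_appeal d}
    = ennreal (1 - qp * top_appeal d / weight d)"
proof -
  define G where "G e = (if top_appeal e = top_appeal d then 1 else 0 :: real)" for e
  have "{x\<in>space step_space. top_appeal (step d x) = top_appeal d} \<in> sets step_space"
    using measurable_sets[OF measurable_step, of "{e. top_appeal e = top_appeal d}" d]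
    by (simp add: vimage_def)
  then have "emeasure step_space {x\<in>space step_space. top_appeal (step d x) = top_appeal d}
      = (\<integral>\<^sup>+x. indicator {x\<in>space step_space. top_appeal (step d x) = top_appeal d} x \<partial>step_space)"
    by simp
  also have "\<dots> = (\<integral>\<^sup>+x. ennreal (G (step d x)) \<partial>step_space)"
    by (intro nn_integral_cong) (simp add: G_def indicator_def)
  also have "\<dots> = ennreal (G d + qp * top_appeal d / weight d * (0 - G d)
      + qm * low_appeal d / weight d * (1 - G d))"
    by (rule nn_integral_step_tiers) (auto simp: G_def buy_top buy_low)
  finally show ?thesis by (simp add: G_def)
qed

lemma AE_top_appeal_moves: "AE \<omega> in S. \<exists>t. top_appeal (chain s \<omega> t) \<noteq> top_appeal s"
proof -
  define P where "P = {e. top_appeal e = top_appeal s}"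
  have "AE \<omega> in S. \<exists>t. chain s \<omega> t \<notin> P"
  proof (rule AE_chain_leaves[where w = weight and c = "qp * top_appeal s" and \<delta> = vmax])
    show "0 < qp * top_appeal s" using qp_pos top_appeal_pos by simp
    show "qp * top_appeal s \<le> weight e" if "e \<in> P" for e
      using that qp_top_appeal_le_weight[of e] by (simp add: P_def)
    show "weight (step e x) \<le> weight e + vmax" for e x by (rule weight_step_le)
    show "emeasure step_space {x\<in>space step_space. step e x \<in> P}
        \<le> ennreal (1 - qp * top_appeal s / weight e)" if "e \<in> P" for e
      using that emeasure_top_appeal_unchanged[of e] by (simp add: P_def)
  qed (simp_all add: P_def vmax_nonneg)
  then show ?thesis by (simp add: P_def)
qed

lemma AE_potential_bounded:
  "threshold \<le> top_appeal s \<Longrightarrow> AE \<omega> in S. bdd_above (range (\<lambda>t. potential (chain s \<omega> t)))"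
  by (rule AE_chain_bounded[where P = "{e. threshold \<le> top_appeal e}"])
    (auto intro: order_trans top_appeal_step_mono potential_nonneg nn_integral_potential_step_le)

lemma top_appeal_at_top:
  fixes D :: "nat \<Rightarrow> nat \<Rightarrow> nat"
  assumes mono: "\<And>T t. top_appeal (D T) \<le> top_appeal (D (T + t))"
    and moves: "\<And>T. \<exists>t. top_appeal (D (T + t)) \<noteq> top_appeal (D T)"
  shows "filterlim (\<lambda>t. top_appeal (D t)) at_top sequentially"
proof -
  define g where "g t = (\<Sum>i\<in>{1..j}. D t i)" for t
  have eq: "top_appeal (D t) = top_appeal (\<lambda>_. 0) + real (g t)" for t
    unfolding g_def by (rule top_appeal_eq)
  have "filterlim g at_top sequentially"
  proof (rule nat_seq_at_top_if_moving)
    show "g T \<le> g (T + t)" for T t using mono[of T t] unfolding eq by simp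
    show "\<exists>t. g (T + t) \<noteq> g T" for T using moves[of T] unfolding eq by simp
  qed
  then show ?thesis
    unfolding eq by (intro filterlim_tendsto_add_at_top[OF tendsto_const]
        filterlim_compose[OF filterlim_real_sequentially])
qed

lemma low_share_tendsto_zero:
  fixes D :: "nat \<Rightarrow> nat \<Rightarrow> nat"
  assumes top: "filterlim (\<lambda>t. top_appeal (D t)) at_top sequentially"
    and bound: "\<forall>\<^sub>F t in sequentially. low_appeal (D t) \<le> C * top_appeal (D t) powr \<beta>"
  shows "(\<lambda>t. low_share (D t)) \<longlonglongrightarrow> 0"
proof (rule tendsto_sandwich[OF _ _ tendsto_const])
  show "\<forall>\<^sub>F t in sequentially. 0 \<le> low_share (D t)"
    by (simp add: low_share_def sum_nonneg)
  have "\<forall>\<^sub>F t in sequentially. 2 * top_appeal (\<lambda>_. 0) \<le> top_appeal (D t)"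
    using top by (simp add: filterlim_at_top)
  with bound show "\<forall>\<^sub>F t in sequentially. low_share (D t) \<le> 2 * C * top_appeal (D t) powr (\<beta> - 1)"
  proof eventually_elim
    case (elim t)
    define h where "h = top_appeal (D t)"
    have h: "0 < h" unfolding h_def by (rule top_appeal_pos)
    have num: "(\<Sum>i\<in>{j+1..n}. real (D t i)) \<le> low_appeal (D t)"
      unfolding low_appeal_def using A_pos j_range by (intro sum_mono) (auto intro: less_imp_le)
    have "h / 2 \<le> real (\<Sum>i\<in>{1..j}. D t i)"
      using elim(2) top_appeal_eq[of "D t"] unfolding h_def by simp
    also have "\<dots> \<le> (\<Sum>i\<in>{1..n}. real (D t i))"
      unfolding sum_tiers[of "\<lambda>i. real (D t i)"] by (simp add: sum_nonneg)
    finally have den: "h / 2 \<le> (\<Sum>i\<in>{1..n}. real (D t i))" .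
    have "low_share (D t) \<le> low_appeal (D t) / (h / 2)"
      unfolding low_share_def using num den h low_appeal_pos[of "D t"]
      by (intro frac_le) (auto intro: sum_nonneg)
    also have "\<dots> \<le> C * h powr \<beta> / (h / 2)"
      using elim(1) h unfolding h_def by (intro divide_right_mono) auto
    also have "\<dots> = 2 * C * h powr (\<beta> - 1)"
      using h by (simp add: powr_diff)
    finally show ?case unfolding h_def .
  qed
  show "(\<lambda>t. 2 * C * top_appeal (D t) powr (\<beta> - 1)) \<longlonglongrightarrow> 0"
    using \<beta>_bounds by (intro tendsto_mult_right_zero tendsto_neg_powr top) simp
qed

lemma AE_low_share_tendsto_zero: "AE \<omega> in S. (\<lambda>t. low_share (chain s \<omega> t)) \<longlonglongrightarrow> 0"
proof -
  have moves: "AE \<omega> in S. \<forall>T. \<exists>t.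
      top_appeal (chain (chain s \<omega> T) (sdrop T \<omega>) t) \<noteq> top_appeal (chain s \<omega> T)"
    by (rule AE_chain_all_times[OF AE_top_appeal_moves]) (intro pred_intros_countable pred_chain)
  have bounded: "AE \<omega> in S. \<forall>T. threshold \<le> top_appeal (chain s \<omega> T) \<longrightarrow>
      bdd_above (range (\<lambda>t. potential (chain (chain s \<omega> T) (sdrop T \<omega>) t)))"
  proof (rule AE_chain_all_times)
    fix e
    show "AE \<omega> in S. threshold \<le> top_appeal e \<longrightarrow> bdd_above (range (\<lambda>t. potential (chain e \<omega> t)))"
      using AE_potential_bounded[of e] by (cases "threshold \<le> top_appeal e") simp_all
    show "Measurable.pred S (\<lambda>\<omega>. threshold \<le> top_appeal e \<longrightarrow> bdd_above (range (\<lambda>t. potential (chain e \<omega> t))))"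
      by (cases "threshold \<le> top_appeal e") (simp_all add: pred_bdd_above_chain)
  qed
  from moves bounded show ?thesis
  proof eventually_elim
    case (elim \<omega>)
    have shift: "chain (chain s \<omega> T) (sdrop T \<omega>) t = chain s \<omega> (T + t)" for T t
      by (simp add: chain_add)
    have top: "filterlim (\<lambda>t. top_appeal (chain s \<omega> t)) at_top sequentially"
      using elim(1) unfolding shift by (intro top_appeal_at_top top_appeal_chain_mono) auto
    then obtain T0 where T0: "threshold \<le> top_appeal (chain s \<omega> T0)"
      by (auto simp: filterlim_at_top eventually_sequentially)
    then obtain C where C: "\<And>t. potential (chain s \<omega> (T0 + t)) \<le> C"
      using elim(2) unfolding shift by (auto simp: bdd_above_def)
    have "low_appeal (chain s \<omega> t) \<le> C * top_appeal (chain s \<omega> t) powr \<beta>" if "T0 \<le> t" for t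
      using C[of "t - T0"] that top_appeal_pos[of "chain s \<omega> t"]
      by (simp add: potential_def divide_le_eq)
    then have "\<forall>\<^sub>F t in sequentially. low_appeal (chain s \<omega> t) \<le> C * top_appeal (chain s \<omega> t) powr \<beta>"
      by (auto simp: eventually_sequentially)
    from low_share_tendsto_zero[OF top this] show ?case .
  qed
qed

end

theorem mainTheorem6:
  fixes n j :: nat and v A q :: "nat \<Rightarrow> real" and qp qm :: real
  assumes "1 \<le> j" and "j < n"
    and "\<And>i. i \<in> {1..n} \<Longrightarrow> v i > 0"
    and "\<And>i. i \<in> {1..n} \<Longrightarrow> A i > 0"
    and "\<And>i. i \<in> {1..n} \<Longrightarrow> 0 \<le> q i \<and> q i \<le> 1"
    and "qp > qm" and "qm \<ge> 0"
    and "\<And>i. i \<in> {1..j} \<Longrightarrow> v i * q i = qp"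
    and "\<And>i. i \<in> {j+1..n} \<Longrightarrow> v i * q i = qm"
  shows "AE \<omega> in market_space.
           (\<lambda>t. (\<Sum>i\<in>{j+1..n}. real (purchases n v A q \<omega> t i))
                / (\<Sum>i\<in>{1..n}. real (purchases n v A q \<omega> t i))) \<longlonglongrightarrow> 0"
proof -
  interpret two_tier_market n v A q j qp qm
    using assms by unfold_locales auto
  show ?thesis
    using AE_low_share_tendsto_zero[of "\<lambda>i. 0"]
    unfolding market_space_eq purchases_eq_chain low_share_def .
qed

end
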